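(* For the modified EnvZ/OmpR network described in the context and any positive rate constants $k_1,\dots,k_{16}$, put \[\gamma=\frac{k_{10}k_{12}}{k_{11}+k_{12}}\cdot\frac{k_3}{k_4+k_5}+\frac{k_{13}k_{15}}{k_{14}+k_{15}}\cdot\frac{k_2}{k_1}.\] Then for every choice of positive values of $[\mathrm{EnvZ}]$ and $[\mathrm{EnvZ\text{-}P}]$ there is exactly one positive steady state with these values, and at every positive steady state \[[\mathrm{OmpR\text{-}P}]=\frac{k_3k_5\,[\mathrm{EnvZ}]}{(k_4+k_5)(\gamma[\mathrm{EnvZ}]+k_{16})}.\] Consequently, the set of values of $[\mathrm{OmpR\text{-}P}]$ over all positive steady states is exactly the open interval $\bigl(0,\;k_3k_5/((k_4+k_5)\gamma)\bigr)$; in particular $[\mathrm{OmpR\text{-}P}]$ does not exhibit absolute concentration robustness (it takes different values at different positive steady states), and $k_3k_5/((k_4+k_5)\gamma)$ is the best possible upper bound.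
   Context: The modified EnvZ/OmpR network has mass-action kinetics and reactions $\mathrm{EnvZ\text{-}ADP}\underset{k_2}{\overset{k_1}{\rightleftharpoons}}\mathrm{EnvZ}\underset{k_4}{\overset{k_3}{\rightleftharpoons}}\mathrm{EnvZ\text{-}ATP}\xrightarrow{k_5}\mathrm{EnvZ\text{-}P}$; $\mathrm{EnvZ\text{-}P}+\mathrm{OmpR}\underset{k_7}{\overset{k_6}{\rightleftharpoons}}\mathrm{EnvZ\text{-}P\text{-}OmpR}\underset{k_9}{\overset{k_8}{\rightleftharpoons}}\mathrm{EnvZ}+\mathrm{OmpR\text{-}P}$; $\mathrm{EnvZ\text{-}ATP}+\mathrm{OmpR\text{-}P}\underset{k_{11}}{\overset{k_{10}}{\rightleftharpoons}}\mathrm{EnvZ\text{-}ATP\text{-}OmpR\text{-}P}\xrightarrow{k_{12}}\mathrm{EnvZ\text{-}ATP}+\mathrm{OmpR}$; $\mathrm{EnvZ\text{-}ADP}+\mathrm{OmpR\text{-}P}\underset{k_{14}}{\overset{k_{13}}{\rightleftharpoons}}\mathrm{EnvZ\text{-}ADP\text{-}OmpR\text{-}P}\xrightarrow{k_{15}}\mathrm{EnvZ\text{-}ADP}+\mathrm{OmpR}$; $\mathrm{OmpR\text{-}P}\xrightarrow{k_{16}}\mathrm{OmpR}$ (here $A\underset{k'}{\overset{k}{\rightleftharpoons}}B$ means $A\xrightarrow{k}B$ and $B\xrightarrow{k'}A$; hyphenated names are single species, nine species in total). Square brackets denote concentrations; a positive steady state is a vector of positive concentrations of all nine species at which all mass-action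 rates of change vanish. A species exhibits absolute concentration robustness if it takes the same value at every positive steady state. *)

theory Defs
  imports Complex_Main
begin

datatype species =
    EnvZ_ADP | EnvZ | EnvZ_ATP | EnvZ_P | OmpR | OmpR_P
  | EnvZ_P_OmpR | EnvZ_ATP_OmpR_P | EnvZ_ADP_OmpR_P

text \<open>Mass-action rate of change of each species; k i is rate constant k_i
  (indices 1..16), x s the concentration of species s.\<close>
fun dxdt :: "(nat \<Rightarrow> real) \<Rightarrow> (species \<Rightarrow> real) \<Rightarrow> species \<Rightarrow> real" where
  "dxdt k x EnvZ_ADP =
     - k 1 * x EnvZ_ADP + k 2 * x EnvZ
     - k 13 * x EnvZ_ADP * x OmpR_P + k 14 * x EnvZ_ADP_OmpR_P + k 15 * x EnvZ_ADP_OmpR_P"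
| "dxdt k x EnvZ =
     k 1 * x EnvZ_ADP - k 2 * x EnvZ - k 3 * x EnvZ + k 4 * x EnvZ_ATP
     + k 8 * x EnvZ_P_OmpR - k 9 * x EnvZ * x OmpR_P"
| "dxdt k x EnvZ_ATP =
     k 3 * x EnvZ - k 4 * x EnvZ_ATP - k 5 * x EnvZ_ATP
     - k 10 * x EnvZ_ATP * x OmpR_P + k 11 * x EnvZ_ATP_OmpR_P + k 12 * x EnvZ_ATP_OmpR_P"
| "dxdt k x EnvZ_P =
     k 5 * x EnvZ_ATP - k 6 * x EnvZ_P * x OmpR + k 7 * x EnvZ_P_OmpR"
| "dxdt k x OmpR =
     - k 6 * x EnvZ_P * x OmpR + k 7 * x EnvZ_P_OmpR + k 12 * x EnvZ_ATP_OmpR_P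
     + k 15 * x EnvZ_ADP_OmpR_P + k 16 * x OmpR_P"
| "dxdt k x OmpR_P =
     k 8 * x EnvZ_P_OmpR - k 9 * x EnvZ * x OmpR_P
     - k 10 * x EnvZ_ATP * x OmpR_P + k 11 * x EnvZ_ATP_OmpR_P
     - k 13 * x EnvZ_ADP * x OmpR_P + k 14 * x EnvZ_ADP_OmpR_P - k 16 * x OmpR_P"
| "dxdt k x EnvZ_P_OmpR =
     k 6 * x EnvZ_P * x OmpR - k 7 * x EnvZ_P_OmpR - k 8 * x EnvZ_P_OmpR
     + k 9 * x EnvZ * x OmpR_P"
| "dxdt k x EnvZ_ATP_OmpR_P =
     k 10 * x EnvZ_ATP * x OmpR_P - k 11 * x EnvZ_ATP_OmpR_P - k 12 * x EnvZ_ATP_OmpR_P"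
| "dxdt k x EnvZ_ADP_OmpR_P =
     k 13 * x EnvZ_ADP * x OmpR_P - k 14 * x EnvZ_ADP_OmpR_P - k 15 * x EnvZ_ADP_OmpR_P"

definition pos_steady_state :: "(nat \<Rightarrow> real) \<Rightarrow> (species \<Rightarrow> real) \<Rightarrow> bool" where
  "pos_steady_state k x \<longleftrightarrow> (\<forall>s. x s > 0) \<and> (\<forall>s. dxdt k x s = 0)"

definition has_ACR :: "(nat \<Rightarrow> real) \<Rightarrow> species \<Rightarrow> bool" where
  "has_ACR k s \<longleftrightarrow> (\<forall>x y. pos_steady_state k x \<and> pos_steady_state k y \<longrightarrow> x s = y s)"

definition gamma :: "(nat \<Rightarrow> real) \<Rightarrow> real" where
  "gamma k = k 10 * k 12 / (k 11 + k 12) * (k 3 / (k 4 + k 5))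
           + k 13 * k 15 / (k 14 + k 15) * (k 2 / k 1)"

end

theory Submission
  imports Defs
begin

(* The steady-state equations of the EnvZ/OmpR network can be solved
   explicitly in terms of e = [EnvZ] and p = [EnvZ-P].  The reversible pairs
   EnvZ-ADP <-> EnvZ <-> EnvZ-ATP and the two phosphatase complexes are in
   detailed balance with EnvZ; the one non-linear step is a phosphate flux balance
   (phosphorylation k5 [EnvZ-ATP] equals the total dephosphorylation flux), which
   after substitution reads  [OmpR-P] (gamma e + k16) = k5 [EnvZ-ATP]. *)

lemma saturating_image:
  fixes c g d :: real
  assumes c: "c > 0" and g: "g > 0" and d: "d > 0"
  shows "(\<lambda>e. c * e / (g * e + d)) ` {0<..} = {0<..<c / g}"
proof (intro equalityI subsetI)
  fix q assume "q \<in> (\<lambda>e. c * e / (g * e + d)) ` {0<..}"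
  then obtain e where e: "e > 0" and q: "q = c * e / (g * e + d)" by auto
  have den: "g * e + d > 0" using g e d by (simp add: add_pos_pos)
  have "c * e * g < c * (g * e + d)" using c d by (simp add: algebra_simps)
  then have "q < c / g" using den g unfolding q by (simp add: field_simps)
  moreover have "q > 0" using c e den unfolding q by simp
  ultimately show "q \<in> {0<..<c / g}" by simp
next
  fix q assume "q \<in> {0<..<c / g}"
  then have q: "q > 0" and gap: "c - g * q > 0" using g by (auto simp: field_simps)
  define e where "e = d * q / (c - g * q)"
  have "e > 0" using d q gap unfolding e_def by simp
  moreover have "g * e + d = d * c / (c - g * q)"
    using gap unfolding e_def by (simp add: field_simps)
  then have "c * e / (g * e + d) = q"
    using gap c d unfolding e_def by (simp add: field_simps)
  ultimately show "q \<in> (\<lambda>e. c * e / (g * e + d)) ` {0<..}" by force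
qed

text \<open>Phosphate flux balance: summing the rates of EnvZ-P, OmpR-P and the three
  complexes, all phosphotransfer terms cancel, so at any steady state the
  phosphorylation flux equals the total dephosphorylation flux.\<close>
lemma flux_balance:
  assumes steady: "\<forall>s. dxdt k x s = 0"
  shows "k 12 * x EnvZ_ATP_OmpR_P + k 15 * x EnvZ_ADP_OmpR_P + k 16 * x OmpR_P
         = k 5 * x EnvZ_ATP"
proof -
  have "dxdt k x EnvZ_P + dxdt k x OmpR_P + dxdt k x EnvZ_P_OmpR
        + dxdt k x EnvZ_ATP_OmpR_P + dxdt k x EnvZ_ADP_OmpR_P = 0"
    using steady by (simp del: dxdt.simps)
  moreover have "dxdt k x EnvZ_P + dxdt k x OmpR_P + dxdt k x EnvZ_P_OmpR
        + dxdt k x EnvZ_ATP_OmpR_P + dxdt k x EnvZ_ADP_OmpR_P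
        = k 5 * x EnvZ_ATP - k 12 * x EnvZ_ATP_OmpR_P - k 15 * x EnvZ_ADP_OmpR_P
          - k 16 * x OmpR_P"
    by (simp add: algebra_simps)
  ultimately show ?thesis by linarith
qed

definition ss_ADP :: "(nat \<Rightarrow> real) \<Rightarrow> real \<Rightarrow> real" where
  "ss_ADP k e = k 2 * e / k 1"

definition ss_ATP :: "(nat \<Rightarrow> real) \<Rightarrow> real \<Rightarrow> real" where
  "ss_ATP k e = k 3 * e / (k 4 + k 5)"

definition ss_OmpR_P :: "(nat \<Rightarrow> real) \<Rightarrow> real \<Rightarrow> real" where
  "ss_OmpR_P k e = k 3 * k 5 * e / ((k 4 + k 5) * (gamma k * e + k 16))"

definition ss_ATP_OmpR_P :: "(nat \<Rightarrow> real) \<Rightarrow> real \<Rightarrow> real" where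
  "ss_ATP_OmpR_P k e = k 10 * ss_ATP k e * ss_OmpR_P k e / (k 11 + k 12)"

definition ss_ADP_OmpR_P :: "(nat \<Rightarrow> real) \<Rightarrow> real \<Rightarrow> real" where
  "ss_ADP_OmpR_P k e = k 13 * ss_ADP k e * ss_OmpR_P k e / (k 14 + k 15)"

definition ss_P_OmpR :: "(nat \<Rightarrow> real) \<Rightarrow> real \<Rightarrow> real" where
  "ss_P_OmpR k e = (k 5 * ss_ATP k e + k 9 * e * ss_OmpR_P k e) / k 8"

definition ss_OmpR :: "(nat \<Rightarrow> real) \<Rightarrow> real \<Rightarrow> real \<Rightarrow> real" where
  "ss_OmpR k e p = (k 5 * ss_ATP k e + k 7 * ss_P_OmpR k e) / (k 6 * p)"

definition ss_point :: "(nat \<Rightarrow> real) \<Rightarrow> real \<Rightarrow> real \<Rightarrow> species \<Rightarrow> real" where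
  "ss_point k e p s = (case s of
      EnvZ_ADP \<Rightarrow> ss_ADP k e
    | EnvZ \<Rightarrow> e
    | EnvZ_ATP \<Rightarrow> ss_ATP k e
    | EnvZ_P \<Rightarrow> p
    | OmpR \<Rightarrow> ss_OmpR k e p
    | OmpR_P \<Rightarrow> ss_OmpR_P k e
    | EnvZ_P_OmpR \<Rightarrow> ss_P_OmpR k e
    | EnvZ_ATP_OmpR_P \<Rightarrow> ss_ATP_OmpR_P k e
    | EnvZ_ADP_OmpR_P \<Rightarrow> ss_ADP_OmpR_P k e)"

text \<open>The asymptotic value of [OmpR-P] for large [EnvZ], the claimed supremum.\<close>
definition OmpR_P_sup :: "(nat \<Rightarrow> real) \<Rightarrow> real" where
  "OmpR_P_sup k = k 3 * k 5 / ((k 4 + k 5) * gamma k)"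

locale positive_rates =
  fixes k :: "nat \<Rightarrow> real"
  assumes rates_pos: "\<forall>i\<in>{1..16}. k i > 0"
begin

lemma k_pos:
  "k 1 > 0" "k 2 > 0" "k 3 > 0" "k 4 > 0" "k 5 > 0" "k 6 > 0" "k 7 > 0" "k 8 > 0"
  "k 9 > 0" "k 10 > 0" "k 11 > 0" "k 12 > 0" "k 13 > 0" "k 14 > 0" "k 15 > 0" "k 16 > 0"
  using rates_pos by auto

lemma gamma_pos: "gamma k > 0"
  using k_pos unfolding gamma_def by (intro add_pos_pos mult_pos_pos divide_pos_pos) auto

lemma saturation_denominator_pos: "e \<ge> 0 \<Longrightarrow> gamma k * e + k 16 > 0"
  using gamma_pos k_pos(16) by (simp add: add_nonneg_pos)

lemma OmpR_P_sup_pos: "OmpR_P_sup k > 0"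
  using k_pos gamma_pos unfolding OmpR_P_sup_def by simp

text \<open>The flux balance holds along the explicit parametrisation; this is exactly
  the defining property of ss_OmpR_P.\<close>
lemma ss_point_flux_balance:
  assumes "e \<ge> 0"
  shows "k 12 * ss_ATP_OmpR_P k e + k 15 * ss_ADP_OmpR_P k e + k 16 * ss_OmpR_P k e
         = k 5 * ss_ATP k e"
proof -
  have den: "gamma k * e + k 16 \<noteq> 0" "k 4 + k 5 \<noteq> 0"
    using saturation_denominator_pos[OF assms] k_pos by auto
  have "k 12 * ss_ATP_OmpR_P k e + k 15 * ss_ADP_OmpR_P k e + k 16 * ss_OmpR_P k e
        = ss_OmpR_P k e * (gamma k * e + k 16)"
    using k_pos unfolding ss_ATP_OmpR_P_def ss_ADP_OmpR_P_def ss_ATP_def ss_ADP_def gamma_def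
    by (simp add: field_simps)
  also have "\<dots> = k 5 * ss_ATP k e"
    using den unfolding ss_OmpR_P_def ss_ATP_def
    by (simp add: divide_simps del: distrib_left distrib_right)
  finally show ?thesis .
qed

lemma ss_point_positive:
  assumes e: "e > 0" and p: "p > 0"
  shows "ss_point k e p s > 0"
proof -
  have ADP: "ss_ADP k e > 0" and ATP: "ss_ATP k e > 0"
    using k_pos e unfolding ss_ADP_def ss_ATP_def by simp_all
  have OmpR_P: "ss_OmpR_P k e > 0"
    using k_pos e saturation_denominator_pos[of e] unfolding ss_OmpR_P_def by simp
  have P_OmpR: "ss_P_OmpR k e > 0"
    using k_pos ATP OmpR_P e unfolding ss_P_OmpR_def by (simp add: add_pos_pos)
  have "ss_ATP_OmpR_P k e > 0" "ss_ADP_OmpR_P k e > 0" "ss_OmpR k e p > 0"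
    using k_pos ADP ATP OmpR_P P_OmpR p
    unfolding ss_ATP_OmpR_P_def ss_ADP_OmpR_P_def ss_OmpR_def by (simp_all add: add_pos_pos)
  then show ?thesis using ADP ATP OmpR_P P_OmpR e p by (cases s) (simp_all add: ss_point_def)
qed

text \<open>Existence: the explicit point is a positive steady state.  Each defining
  equation makes one rate vanish; the OmpR-P rate needs the flux balance.\<close>
lemma ss_point_steady_state:
  assumes e: "e > 0" and p: "p > 0"
  shows "pos_steady_state k (ss_point k e p)"
proof -
  have "k 1 * ss_ADP k e = k 2 * e"
    and "(k 4 + k 5) * ss_ATP k e = k 3 * e"
    and "(k 11 + k 12) * ss_ATP_OmpR_P k e = k 10 * ss_ATP k e * ss_OmpR_P k e"
    and "(k 14 + k 15) * ss_ADP_OmpR_P k e = k 13 * ss_ADP k e * ss_OmpR_P k e"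
    and "k 8 * ss_P_OmpR k e = k 5 * ss_ATP k e + k 9 * e * ss_OmpR_P k e"
    and "k 6 * p * ss_OmpR k e p = k 5 * ss_ATP k e + k 7 * ss_P_OmpR k e"
    using k_pos p unfolding ss_ADP_def ss_ATP_def ss_ATP_OmpR_P_def ss_ADP_OmpR_P_def
      ss_P_OmpR_def ss_OmpR_def by simp_all
  note equations = this ss_point_flux_balance[of e]
  have "dxdt k (ss_point k e p) s = 0" for s
    using equations e by (cases s) (simp_all add: ss_point_def algebra_simps)
  then show ?thesis using ss_point_positive[OF e p] unfolding pos_steady_state_def by simp
qed

text \<open>Detailed balance fixes EnvZ-ADP, EnvZ-ATP and the two
  phosphatase complexes in terms of [OmpR-P]; flux balance then fixes [OmpR-P];
  finally the EnvZ-P and EnvZ-P-OmpR equations give the remaining two species.\<close>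
lemma steady_state_is_ss_point:
  assumes ss: "pos_steady_state k x"
  shows "x = ss_point k (x EnvZ) (x EnvZ_P)"
proof -
  have pos: "\<And>s. x s > 0" and steady: "\<forall>s. dxdt k x s = 0"
    using ss unfolding pos_steady_state_def by auto
  note rate_zero = steady[rule_format]
  have ADP: "x EnvZ_ADP = ss_ADP k (x EnvZ)"
    using rate_zero[of EnvZ_ADP] rate_zero[of EnvZ_ADP_OmpR_P] k_pos
    unfolding ss_ADP_def by (simp add: field_simps)
  have ATP: "x EnvZ_ATP = ss_ATP k (x EnvZ)"
    using rate_zero[of EnvZ_ATP] rate_zero[of EnvZ_ATP_OmpR_P] k_pos
    unfolding ss_ATP_def by (simp add: field_simps)
  have C_ATP: "x EnvZ_ATP_OmpR_P = k 10 * x EnvZ_ATP * x OmpR_P / (k 11 + k 12)"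
    using rate_zero[of EnvZ_ATP_OmpR_P] k_pos by (simp add: field_simps)
  have C_ADP: "x EnvZ_ADP_OmpR_P = k 13 * x EnvZ_ADP * x OmpR_P / (k 14 + k 15)"
    using rate_zero[of EnvZ_ADP_OmpR_P] k_pos by (simp add: field_simps)
  have "x OmpR_P * (gamma k * x EnvZ + k 16) = k 5 * x EnvZ_ATP"
    using flux_balance[OF steady] k_pos unfolding C_ATP C_ADP ADP ATP
    unfolding ss_ADP_def ss_ATP_def gamma_def by (simp add: field_simps)
  then have "x OmpR_P = k 5 * x EnvZ_ATP / (gamma k * x EnvZ + k 16)"
    using saturation_denominator_pos[of "x EnvZ"] pos[of EnvZ] by (simp add: eq_divide_eq)
  then have OmpR_P: "x OmpR_P = ss_OmpR_P k (x EnvZ)"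
    unfolding ATP ss_OmpR_P_def ss_ATP_def by simp
  have "x EnvZ_P_OmpR = (k 5 * x EnvZ_ATP + k 9 * x EnvZ * x OmpR_P) / k 8"
    using rate_zero[of EnvZ_P] rate_zero[of EnvZ_P_OmpR] k_pos by (simp add: field_simps)
  then have P_OmpR: "x EnvZ_P_OmpR = ss_P_OmpR k (x EnvZ)"
    unfolding ss_P_OmpR_def ATP OmpR_P .
  have "x OmpR = (k 5 * x EnvZ_ATP + k 7 * x EnvZ_P_OmpR) / (k 6 * x EnvZ_P)"
    using rate_zero[of EnvZ_P] pos[of EnvZ_P] k_pos by (simp add: field_simps)
  then have OmpR: "x OmpR = ss_OmpR k (x EnvZ) (x EnvZ_P)"
    unfolding ss_OmpR_def ATP P_OmpR .
  show ?thesis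
  proof
    fix s show "x s = ss_point k (x EnvZ) (x EnvZ_P) s"
      using ADP ATP OmpR_P P_OmpR OmpR C_ATP C_ADP
      by (cases s) (simp_all add: ss_point_def ss_ATP_OmpR_P_def ss_ADP_OmpR_P_def)
  qed
qed

lemma steady_state_unique:
  assumes "e > 0" "p > 0"
  shows "\<exists>!x. pos_steady_state k x \<and> x EnvZ = e \<and> x EnvZ_P = p"
proof (rule ex1I[of _ "ss_point k e p"])
  show "pos_steady_state k (ss_point k e p) \<and> ss_point k e p EnvZ = e \<and> ss_point k e p EnvZ_P = p"
    using ss_point_steady_state[OF assms] by (simp add: ss_point_def)
next
  fix x assume x: "pos_steady_state k x \<and> x EnvZ = e \<and> x EnvZ_P = p"
  then have "x = ss_point k (x EnvZ) (x EnvZ_P)" by (blast intro: steady_state_is_ss_point)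
  also have "\<dots> = ss_point k e p" using x by simp
  finally show "x = ss_point k e p" .
qed

lemma steady_state_OmpR_P:
  assumes "pos_steady_state k x"
  shows "x OmpR_P = ss_OmpR_P k (x EnvZ)"
proof -
  have "x OmpR_P = ss_point k (x EnvZ) (x EnvZ_P) OmpR_P"
    using steady_state_is_ss_point[OF assms] by (rule fun_cong)
  then show ?thesis by (simp add: ss_point_def)
qed

lemma OmpR_P_values:
  "{x OmpR_P | x. pos_steady_state k x} = {0 <..< OmpR_P_sup k}"
proof -
  have "{x OmpR_P | x. pos_steady_state k x} = ss_OmpR_P k ` {0<..}"
  proof (intro equalityI subsetI)
    fix q assume "q \<in> {x OmpR_P | x. pos_steady_state k x}"
    then obtain x where "pos_steady_state k x" "q = x OmpR_P" by blast
    then show "q \<in> ss_OmpR_P k ` {0<..}"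
      using steady_state_OmpR_P unfolding pos_steady_state_def by auto
  next
    fix q assume "q \<in> ss_OmpR_P k ` {0<..}"
    then obtain e where "e > 0" "q = ss_OmpR_P k e" by auto
    then have "pos_steady_state k (ss_point k e 1)" "q = ss_point k e 1 OmpR_P"
      using ss_point_steady_state[of e 1] by (simp_all add: ss_point_def)
    then show "q \<in> {x OmpR_P | x. pos_steady_state k x}" by blast
  qed
  also have "ss_OmpR_P k = (\<lambda>e. (k 3 * k 5 / (k 4 + k 5)) * e / (gamma k * e + k 16))"
    unfolding ss_OmpR_P_def by auto
  also have "\<dots> ` {0<..} = {0 <..< (k 3 * k 5 / (k 4 + k 5)) / gamma k}"
    using k_pos gamma_pos by (intro saturating_image) simp_all
  finally show ?thesis unfolding OmpR_P_sup_def by simp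
qed

lemma no_ACR_OmpR_P: "\<not> has_ACR k OmpR_P"
proof
  assume ACR: "has_ACR k OmpR_P"
  have "OmpR_P_sup k / 2 \<in> {x OmpR_P | x. pos_steady_state k x}"
    using OmpR_P_sup_pos unfolding OmpR_P_values by simp
  then obtain x where x: "pos_steady_state k x" "x OmpR_P = OmpR_P_sup k / 2" by auto
  have "OmpR_P_sup k / 3 \<in> {x OmpR_P | x. pos_steady_state k x}"
    using OmpR_P_sup_pos unfolding OmpR_P_values by simp
  then obtain y where y: "pos_steady_state k y" "y OmpR_P = OmpR_P_sup k / 3" by auto
  have "x OmpR_P = y OmpR_P" using ACR x(1) y(1) unfolding has_ACR_def by blast
  then show False using x(2) y(2) OmpR_P_sup_pos by simp
qed

lemma OmpR_P_below_sup: "pos_steady_state k x \<Longrightarrow> x OmpR_P < OmpR_P_sup k"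
  using OmpR_P_values by (metis (mono_tags, lifting) greaterThanLessThan_iff mem_Collect_eq)

lemma OmpR_P_bound_sharp:
  assumes "b < OmpR_P_sup k"
  shows "\<exists>x. pos_steady_state k x \<and> x OmpR_P > b"
proof -
  define q where "q = (max b 0 + OmpR_P_sup k) / 2"
  have "q \<in> {x OmpR_P | x. pos_steady_state k x}" and "b < q"
    using assms OmpR_P_sup_pos unfolding OmpR_P_values q_def by (auto simp: max_def)
  then show ?thesis by auto
qed

end

theorem mainTheorem10:
  fixes k :: "nat \<Rightarrow> real"
  assumes kpos: "\<forall>i\<in>{1..16}. k i > 0"
  shows "(\<forall>e p. e > 0 \<and> p > 0 \<longrightarrow>
            (\<exists>!x. pos_steady_state k x \<and> x EnvZ = e \<and> x EnvZ_P = p))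
       \<and> (\<forall>x. pos_steady_state k x \<longrightarrow>
            x OmpR_P = k 3 * k 5 * x EnvZ / ((k 4 + k 5) * (gamma k * x EnvZ + k 16)))
       \<and> {x OmpR_P | x. pos_steady_state k x} = {0 <..< k 3 * k 5 / ((k 4 + k 5) * gamma k)}
       \<and> \<not> has_ACR k OmpR_P
       \<and> (\<forall>x. pos_steady_state k x \<longrightarrow> x OmpR_P < k 3 * k 5 / ((k 4 + k 5) * gamma k))
       \<and> (\<forall>b. b < k 3 * k 5 / ((k 4 + k 5) * gamma k) \<longrightarrow>
            (\<exists>x. pos_steady_state k x \<and> x OmpR_P > b))"
proof -
  interpret positive_rates k using kpos by unfold_locales
  have unique: "\<forall>e p. e > 0 \<and> p > 0 \<longrightarrow>
      (\<exists>!x. pos_steady_state k x \<and> x EnvZ = e \<and> x EnvZ_P = p)"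
    by (intro allI impI steady_state_unique) simp_all
  have formula: "\<forall>x. pos_steady_state k x \<longrightarrow>
      x OmpR_P = k 3 * k 5 * x EnvZ / ((k 4 + k 5) * (gamma k * x EnvZ + k 16))"
    using steady_state_OmpR_P unfolding ss_OmpR_P_def by blast
  have below_sup: "\<forall>x. pos_steady_state k x \<longrightarrow> x OmpR_P < OmpR_P_sup k"
    using OmpR_P_below_sup by blast
  have sharp: "\<forall>b. b < OmpR_P_sup k \<longrightarrow> (\<exists>x. pos_steady_state k x \<and> x OmpR_P > b)"
    using OmpR_P_bound_sharp by blast
  show ?thesis
    using unique formula OmpR_P_values no_ACR_OmpR_P below_sup sharp
    unfolding OmpR_P_sup_def by (intro conjI) assumption+
qed

end
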